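(* Consider the nearest-neighbor graph $\mathcal{G}^\mu_{x(k)}$ for a positive integer $\mu$, and algorithms in $\mathcal{A}^*_{\rm ave}$. (i) If $n\le\mu+1$, every algorithm in $\mathcal{A}^*_{\rm ave}$ achieves global finite-time consensus. (ii) If $n>\mu+1$, every algorithm in $\mathcal{A}^*_{\rm ave}$ fails to achieve finite-time consensus for Lebesgue-almost every initial value $x^0\in\mathbb{R}^n$. (iii) If $n>\mu+1$ and the sequence $\{\alpha_k\}$ is monotone (non-decreasing or non-increasing), the algorithm achieves global asymptotic consensus.
   Context: Nodes $\mathcal{V}=\{1,\dots,n\}$, $n\ge3$, states $x_i(k)\in\mathbb{R}$, discrete time. The class $\mathcal{A}^*_{\rm ave}$ consists of the updates $$x_i(k+1)=\alpha_k\min_{j\in\mathcal{N}_i(k)}x_j(k)+(1-\alpha_k)\max_{j\in\mathcal{N}_i(k)}x_j(k)$$ with node-independent parameters $\alpha_k\in(0,1)$ for all $k$; here $\mathcal{N}_i(k)=\{i\}\cup\mathcal{N}_i^-(k)\cup\mathcal{N}_i^+(k)$. Nearest-neighbor graph $\mathcal{G}^\mu_{x(k)}$: $\mathcal{N}_i^-(k)$ is a set of $\min(\mu,|\{j:x_j(k)<x_i(k)\}|)$ nodes $j$ with $x_j(k)<x_i(k)$ whose values are closest to $x_i(k)$ among such nodes (ties broken arbitrarily), and $\mathcal{N}_i^+(k)$ is defined symmetrically from $\{j: x_j(k)>x_i(k)\}$. The iteration starts at time $k_0\ge0$ with $x(k_0)=x^0$. Finite-time consensus for $x^0$: there exist $z_*$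 and an integer $T_*$ with $x_i(T_* )=z_*$ for all $i$; asymptotic consensus: there is $z_*$ with $x_i(k)\to z_*$ for all $i$; "global" means for all $k_0$ and all $x^0\in\mathbb{R}^n$. *)

theory Defs
  imports "HOL-Analysis.Analysis"
begin

text \<open>Nodes are the elements of a finite type 'n (so n = CARD('n)); a state is x :: real^'n.\<close>

definition lower_set :: "real^'n \<Rightarrow> 'n \<Rightarrow> 'n set" where
  "lower_set x i = {j. x$j < x$i}"

definition upper_set :: "real^'n \<Rightarrow> 'n \<Rightarrow> 'n set" where
  "upper_set x i = {j. x$j > x$i}"

definition valid_lower :: "nat \<Rightarrow> real^'n \<Rightarrow> 'n \<Rightarrow> 'n set \<Rightarrow> bool" where
  "valid_lower mu x i S \<longleftrightarrow> S \<subseteq> lower_set x i \<and>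
     card S = min mu (card (lower_set x i)) \<and>
     (\<forall>j\<in>S. \<forall>l\<in>lower_set x i - S. x$i - x$j \<le> x$i - x$l)"

definition valid_upper :: "nat \<Rightarrow> real^'n \<Rightarrow> 'n \<Rightarrow> 'n set \<Rightarrow> bool" where
  "valid_upper mu x i S \<longleftrightarrow> S \<subseteq> upper_set x i \<and>
     card S = min mu (card (upper_set x i)) \<and>
     (\<forall>j\<in>S. \<forall>l\<in>upper_set x i - S. x$j - x$i \<le> x$l - x$i)"

definition valid_tiebreak :: "nat \<Rightarrow> (nat \<Rightarrow> real^'n \<Rightarrow> 'n \<Rightarrow> 'n set \<times> 'n set) \<Rightarrow> bool" where
  "valid_tiebreak mu tb \<longleftrightarrow> (\<forall>k x i. valid_lower mu x i (fst (tb k x i)) \<and> valid_upper mu x i (snd (tb k x i)))"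

definition nbhd :: "(nat \<Rightarrow> real^'n \<Rightarrow> 'n \<Rightarrow> 'n set \<times> 'n set) \<Rightarrow> nat \<Rightarrow> real^'n \<Rightarrow> 'n \<Rightarrow> 'n set" where
  "nbhd tb k x i = {i} \<union> fst (tb k x i) \<union> snd (tb k x i)"

definition step :: "(nat \<Rightarrow> real) \<Rightarrow> (nat \<Rightarrow> real^'n \<Rightarrow> 'n \<Rightarrow> 'n set \<times> 'n set) \<Rightarrow> nat \<Rightarrow> real^'n \<Rightarrow> real^'n" where
  "step \<alpha> tb k x = (\<chi> i. \<alpha> k * Min ((\<lambda>j. x$j) ` nbhd tb k x i)
                        + (1 - \<alpha> k) * Max ((\<lambda>j. x$j) ` nbhd tb k x i))"

text \<open>traj \<alpha> tb k0 x0 m is the state x(k0 + m) of the iteration started at time k0 with x(k0) = x0.\<close>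
primrec traj :: "(nat \<Rightarrow> real) \<Rightarrow> (nat \<Rightarrow> real^'n \<Rightarrow> 'n \<Rightarrow> 'n set \<times> 'n set) \<Rightarrow> nat \<Rightarrow> real^'n \<Rightarrow> nat \<Rightarrow> real^'n" where
  "traj \<alpha> tb k0 x0 0 = x0"
| "traj \<alpha> tb k0 x0 (Suc m) = step \<alpha> tb (k0 + m) (traj \<alpha> tb k0 x0 m)"

definition finite_time_consensus :: "(nat \<Rightarrow> real) \<Rightarrow> (nat \<Rightarrow> real^'n \<Rightarrow> 'n \<Rightarrow> 'n set \<times> 'n set) \<Rightarrow> nat \<Rightarrow> real^'n \<Rightarrow> bool" where
  "finite_time_consensus \<alpha> tb k0 x0 \<longleftrightarrow> (\<exists>m z. \<forall>i. traj \<alpha> tb k0 x0 m $ i = z)"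

definition asymptotic_consensus :: "(nat \<Rightarrow> real) \<Rightarrow> (nat \<Rightarrow> real^'n \<Rightarrow> 'n \<Rightarrow> 'n set \<times> 'n set) \<Rightarrow> nat \<Rightarrow> real^'n \<Rightarrow> bool" where
  "asymptotic_consensus \<alpha> tb k0 x0 \<longleftrightarrow> (\<exists>z. \<forall>i. (\<lambda>m. traj \<alpha> tb k0 x0 m $ i) \<longlonglongrightarrow> z)"

end

theory Submission
  imports Defs
begin

text \<open>
  Reflection x \<mapsto> -x swaps lower and upper neighbours and turns the rule with parameters
  \<alpha>(k) into the rule with parameters 1 - \<alpha>(k). Every statement about the top of the state
  therefore follows from its counterpart about the bottom, and only one of them is proved.

  (i) With n \<le> mu + 1 nodes every node sees the global minimum and maximum, so after one
      step all nodes agree.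
  (iii) The minimum never decreases and the maximum never increases. If 1 - \<alpha>(k) \<ge> c > 0
      for all k, the level a + c^s (b - a) spreads to one more node per step (the highest
      node below it sees a node above it), so after n steps the diameter has shrunk by the
      factor 1 - c^n; for monotone \<alpha> such a c exists for \<alpha> or for 1 - \<alpha>. Minimum and
      maximum then have a common limit, which squeezes every node.
  (ii) Once at least mu nodes lie strictly between minimum and maximum, this stays true
      forever (a counting argument around the reach of a minimal and of a maximal node).
      Initial states with pairwise distinct coordinates have full Lebesgue measure and n - 2
      \<ge> mu such inner nodes, so they never reach consensus.
\<close>

type_synonym 'n tiebreak = "nat \<Rightarrow> real^'n \<Rightarrow> 'n \<Rightarrow> 'n set \<times> 'n set"

definition nb_min :: "'n tiebreak \<Rightarrow> nat \<Rightarrow> real^'n \<Rightarrow> 'n \<Rightarrow> real" where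
  "nb_min tb k x i = Min ((\<lambda>j. x$j) ` nbhd tb k x i)"

definition nb_max :: "'n tiebreak \<Rightarrow> nat \<Rightarrow> real^'n \<Rightarrow> 'n \<Rightarrow> real" where
  "nb_max tb k x i = Max ((\<lambda>j. x$j) ` nbhd tb k x i)"

definition lo :: "real^'n \<Rightarrow> real" where
  "lo x = Min (range (\<lambda>i. x$i))"

definition hi :: "real^'n \<Rightarrow> real" where
  "hi x = Max (range (\<lambda>i. x$i))"

definition diam :: "real^'n \<Rightarrow> real" where
  "diam x = hi x - lo x"

definition inner_nodes :: "real^'n \<Rightarrow> 'n set" where
  "inner_nodes x = {j. lo x < x$j \<and> x$j < hi x}"

lemma step_nth: "step \<alpha> tb k x $ i = \<alpha> k * nb_min tb k x i + (1 - \<alpha> k) * nb_max tb k x i"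
  by (simp add: step_def nb_min_def nb_max_def)

lemma self_in_nbhd: "i \<in> nbhd tb k x i"
  by (simp add: nbhd_def)

lemma nb_min_le_self: "nb_min tb k x i \<le> x$i"
  unfolding nb_min_def by (rule Min_le) (auto simp: nbhd_def)

lemma nb_max_ge: "j \<in> nbhd tb k x i \<Longrightarrow> x$j \<le> nb_max tb k x i"
  unfolding nb_max_def by (rule Max_ge) auto

lemma self_le_nb_max: "x$i \<le> nb_max tb k x i"
  by (rule nb_max_ge[OF self_in_nbhd])

lemma nb_max_attained: obtains j where "j \<in> nbhd tb k x i" "nb_max tb k x i = x$j"
proof -
  have "Max ((\<lambda>j. x$j) ` nbhd tb k x i) \<in> (\<lambda>j. x$j) ` nbhd tb k x i"
    by (rule Max_in) (auto simp: nbhd_def)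
  then show ?thesis using that unfolding nb_max_def by auto
qed

lemma lo_le: "lo x \<le> x$j"
  unfolding lo_def by (rule Min_le) auto

lemma hi_ge: "x$j \<le> hi x"
  unfolding hi_def by (rule Max_ge) auto

lemma lo_attained: obtains j where "x$j = lo x"
proof -
  have "Min (range (\<lambda>i. x$i)) \<in> range (\<lambda>i. x$i)" by (rule Min_in) auto
  then show ?thesis using that unfolding lo_def by (metis rangeE)
qed

lemma hi_attained: obtains j where "x$j = hi x"
proof -
  have "Max (range (\<lambda>i. x$i)) \<in> range (\<lambda>i. x$i)" by (rule Max_in) auto
  then show ?thesis using that unfolding hi_def by (metis rangeE)
qed

lemma lo_le_hi: "lo x \<le> hi x"
  using lo_le[of x] hi_ge[of x] order_trans by blast

lemma nb_min_ge_lo: "lo x \<le> nb_min tb k x i"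
proof -
  have "Min ((\<lambda>j. x$j) ` nbhd tb k x i) \<in> (\<lambda>j. x$j) ` nbhd tb k x i"
    by (rule Min_in) (auto simp: nbhd_def)
  then show ?thesis unfolding nb_min_def using lo_le by auto
qed

definition mirror_tb :: "('n::finite) tiebreak \<Rightarrow> 'n tiebreak" where
  "mirror_tb tb k x i = prod.swap (tb k (-x) i)"

lemma lower_set_uminus: "lower_set (-x) i = upper_set x i"
  and upper_set_uminus: "upper_set (-x) i = lower_set x i"
  by (auto simp: lower_set_def upper_set_def)

lemma valid_lower_uminus: "valid_lower mu (-x) i S \<longleftrightarrow> valid_upper mu x i S"
  and valid_upper_uminus: "valid_upper mu (-x) i S \<longleftrightarrow> valid_lower mu x i S"
  by (simp_all add: valid_lower_def valid_upper_def lower_set_uminus upper_set_uminus)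

lemma valid_tiebreak_mirror: "valid_tiebreak mu tb \<Longrightarrow> valid_tiebreak mu (mirror_tb tb)"
  unfolding valid_tiebreak_def mirror_tb_def
  by (metis fst_swap snd_swap minus_minus valid_lower_uminus valid_upper_uminus)

lemma nbhd_mirror: "nbhd (mirror_tb tb) k (-x) i = nbhd tb k x i"
  by (auto simp: nbhd_def mirror_tb_def)

lemma nb_min_mirror: "nb_min (mirror_tb tb) k (-x) i = - nb_max tb k x i"
  and nb_max_mirror: "nb_max (mirror_tb tb) k (-x) i = - nb_min tb k x i"
proof -
  have "finite (nbhd tb k x i)" "nbhd tb k x i \<noteq> {}"
    using self_in_nbhd by (auto simp: nbhd_def)
  then show "nb_min (mirror_tb tb) k (-x) i = - nb_max tb k x i"
    and "nb_max (mirror_tb tb) k (-x) i = - nb_min tb k x i"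
    by (simp_all add: nb_min_def nb_max_def nbhd_mirror image_image)
qed

lemma lo_uminus: "lo (-x) = - hi x"
  and hi_uminus: "hi (-x) = - lo x"
  by (simp_all add: lo_def hi_def image_image)

lemma diam_uminus: "diam (-x) = diam x"
  by (simp add: diam_def lo_uminus hi_uminus)

lemma inner_nodes_uminus: "inner_nodes (-x) = inner_nodes x"
  by (auto simp: inner_nodes_def lo_uminus hi_uminus)

lemma step_mirror: "step (\<lambda>k. 1 - \<alpha> k) (mirror_tb tb) k (-x) = - step \<alpha> tb k x"
  by (simp add: vec_eq_iff step_nth nb_min_mirror nb_max_mirror algebra_simps)

lemma traj_mirror: "traj (\<lambda>k. 1 - \<alpha> k) (mirror_tb tb) k0 (-x0) m = - traj \<alpha> tb k0 x0 m"
  by (induction m) (simp_all add: step_mirror)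

locale nn_rule =
  fixes mu :: nat and tb :: "'n::finite tiebreak"
  assumes valid: "valid_tiebreak mu tb"
begin

lemma mirror: "nn_rule mu (mirror_tb tb)"
  by unfold_locales (rule valid_tiebreak_mirror[OF valid])

lemma upper_nbrs_sub: "snd (tb k x i) \<subseteq> upper_set x i"
  and card_upper_nbrs: "card (snd (tb k x i)) = min mu (card (upper_set x i))"
  using valid by (simp_all add: valid_tiebreak_def valid_upper_def)

lemma upper_nbrs_closest:
  assumes "j \<in> snd (tb k x i)" "l \<in> upper_set x i" "l \<notin> snd (tb k x i)"
  shows "x$j \<le> x$l"
  using valid assms unfolding valid_tiebreak_def valid_upper_def by fastforce

lemma upper_nbr_gt: "j \<in> snd (tb k x i) \<Longrightarrow> x$i < x$j"
  using upper_nbrs_sub by (auto simp: upper_set_def)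

text \<open>A lower neighbour is an upper neighbour of the mirrored rule.\<close>
lemma lower_nbr_lt: "j \<in> fst (tb k x i) \<Longrightarrow> x$j < x$i"
  using nn_rule.upper_nbr_gt[OF mirror, of j k "-x" i] by (simp add: mirror_tb_def)

lemma upper_nbrs_all:
  assumes "card (upper_set x i) \<le> mu"
  shows "snd (tb k x i) = upper_set x i"
  using assms card_upper_nbrs[of k x i] upper_nbrs_sub[of k x i]
  by (intro card_subset_eq) auto

text \<open>With at most mu + 1 nodes, no node has more than mu nodes above it, so every node
  sees the maximum.\<close>
lemma nb_max_eq_hi:
  assumes small: "CARD('n) \<le> mu + 1"
  shows "nb_max tb k x i = hi x"
proof (rule antisym)
  show "nb_max tb k x i \<le> hi x"
    using nb_max_attained[of tb k x i] hi_ge by metis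
  obtain t where t: "x$t = hi x" by (rule hi_attained)
  have "upper_set x i \<subseteq> UNIV - {i}"
    by (auto simp: upper_set_def)
  then have "card (upper_set x i) \<le> CARD('n) - 1"
    using card_mono[of "UNIV - {i}" "upper_set x i"] by (simp add: card_Diff_subset)
  then have "snd (tb k x i) = upper_set x i"
    using small by (intro upper_nbrs_all) linarith
  then have "t \<in> nbhd tb k x i \<or> x$t = x$i"
    using hi_ge[of x i] t by (cases "x$i < x$t") (auto simp: nbhd_def upper_set_def)
  then show "hi x \<le> nb_max tb k x i"
    using t nb_max_ge[OF self_in_nbhd] nb_max_ge by metis
qed

lemma nb_min_eq_lo: "CARD('n) \<le> mu + 1 \<Longrightarrow> nb_min tb k x i = lo x"
  using nn_rule.nb_max_eq_hi[OF mirror, of k "-x" i]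
  by (simp add: nb_max_mirror hi_uminus)

text \<open>Part (i): with at most mu + 1 nodes, every node sees the global extremes,
  so all nodes agree after a single step.\<close>
theorem consensus_one_step:
  assumes "CARD('n) \<le> mu + 1"
  shows "finite_time_consensus \<alpha> tb k0 x0"
proof -
  have "traj \<alpha> tb k0 x0 1 $ i = \<alpha> k0 * lo x0 + (1 - \<alpha> k0) * hi x0" for i
    using assms by (simp add: step_nth nb_min_eq_lo nb_max_eq_hi)
  then show ?thesis unfolding finite_time_consensus_def by blast
qed

end

text \<open>The minimum of the state can only increase (a convex combination of two values in
  [lo x, hi x] is at least lo x); by mirroring, the maximum can only decrease.\<close>
lemma lo_le_step:
  assumes "0 \<le> \<alpha> k" "\<alpha> k \<le> 1"
  shows "lo x \<le> step \<alpha> tb k x $ i"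
proof -
  have "lo x \<le> nb_max tb k x i"
    using nb_min_ge_lo[of x tb k i] nb_min_le_self[of tb k x i] self_le_nb_max[of x i tb k]
    by linarith
  then have "\<alpha> k * lo x + (1 - \<alpha> k) * lo x \<le> \<alpha> k * nb_min tb k x i + (1 - \<alpha> k) * nb_max tb k x i"
    using assms nb_min_ge_lo by (intro add_mono mult_left_mono) auto
  then show ?thesis by (simp add: step_nth algebra_simps)
qed

lemma lo_traj_mono:
  assumes "\<And>t. 0 \<le> \<alpha> t \<and> \<alpha> t \<le> 1" "m \<le> m'"
  shows "lo (traj \<alpha> tb k0 x0 m) \<le> lo (traj \<alpha> tb k0 x0 m')"
proof (rule lift_Suc_mono_le[OF _ assms(2)])
  fix n
  obtain j where "traj \<alpha> tb k0 x0 (Suc n) $ j = lo (traj \<alpha> tb k0 x0 (Suc n))"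
    by (rule lo_attained)
  then show "lo (traj \<alpha> tb k0 x0 n) \<le> lo (traj \<alpha> tb k0 x0 (Suc n))"
    using lo_le_step assms(1) by (metis traj.simps(2))
qed

lemma hi_traj_antimono:
  assumes "\<And>t. 0 \<le> \<alpha> t \<and> \<alpha> t \<le> 1" "m \<le> m'"
  shows "hi (traj \<alpha> tb k0 x0 m') \<le> hi (traj \<alpha> tb k0 x0 m)"
  using lo_traj_mono[of "\<lambda>k. 1 - \<alpha> k" m m' "mirror_tb tb" k0 "-x0"] assms
  by (simp add: traj_mirror lo_uminus)

text \<open>A nondecreasing lower and a nonincreasing upper sequence whose gap shrinks by a
  factor r < 1 every N steps have a common limit: the gap of the limits satisfies
  g \<le> r g with g \<ge> 0, hence g = 0.\<close>
lemma squeeze_common_limit: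
  fixes L H :: "nat \<Rightarrow> real"
  assumes L: "incseq L" and H: "decseq H" and LH: "\<And>m. L m \<le> H m"
    and r: "0 \<le> r" "r < 1" and shrink: "\<And>p. H (p + N) - L (p + N) \<le> r * (H p - L p)"
  shows "\<exists>z. L \<longlonglongrightarrow> z \<and> H \<longlonglongrightarrow> z"
proof -
  have "L m \<le> H 0" for m
    using LH[of m] decseqD[OF H, of 0 m] by simp
  then obtain zL where zL: "L \<longlonglongrightarrow> zL"
    using incseq_convergent[OF L] by blast
  have "L 0 \<le> H m" for m
    using LH[of m] incseqD[OF L, of 0 m] by simp
  then obtain zH where zH: "H \<longlonglongrightarrow> zH"
    using decseq_convergent[OF H] by blast
  have gap: "(\<lambda>p. H p - L p) \<longlonglongrightarrow> zH - zL"
    using zH zL by (rule tendsto_diff)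
  then have "(\<lambda>p. H (p + N) - L (p + N)) \<longlonglongrightarrow> zH - zL"
    by (rule LIMSEQ_ignore_initial_segment)
  moreover have "(\<lambda>p. r * (H p - L p)) \<longlonglongrightarrow> r * (zH - zL)"
    using gap by (rule tendsto_mult_left)
  ultimately have "zH - zL \<le> r * (zH - zL)"
    using shrink by (intro LIMSEQ_le) auto
  then have "(1 - r) * (zH - zL) \<le> 0"
    by (simp add: algebra_simps)
  then have "zH - zL \<le> 0"
    using r by (simp add: mult_le_0_iff)
  moreover have "0 \<le> zH - zL"
    using LH by (intro LIMSEQ_le[OF tendsto_const gap]) (simp add: algebra_simps)
  ultimately have "zH = zL"
    by simp
  then show ?thesis using zL zH by blast
qed

text \<open>From now on mu \<ge> 1, so a node with some node above it has an upper neighbour.\<close>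
locale nn_rule_pos = nn_rule mu tb for mu and tb :: "'n::finite tiebreak" +
  assumes mu_pos: "1 \<le> mu"
begin

lemma mirror_pos: "nn_rule_pos mu (mirror_tb tb)"
  by (intro nn_rule_pos.intro mirror) (unfold_locales, rule mu_pos)

lemma upper_nbrs_nonempty: "upper_set x i \<noteq> {} \<Longrightarrow> snd (tb k x i) \<noteq> {}"
  using card_upper_nbrs[of k x i] mu_pos by (auto simp: min_def card_eq_0_iff split: if_splits)

text \<open>One step of spreading: let a be a lower bound of the state and y \<ge> a a level
  reached by some node. Then every node of value \<ge> y, and in addition the highest node
  below y (which sees a node \<ge> y among its upper neighbours), ends up at least at
  a + c (y - a), for any c \<le> 1 - \<alpha>(k).\<close>
lemma spreading_step:
  assumes al: "0 \<le> \<alpha> k" and c: "0 \<le> c" "c \<le> 1 - \<alpha> k"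
    and a: "a \<le> lo x" "a \<le> y" and reached: "\<exists>i. y \<le> x$i"
  shows "min CARD('n) (card {i. y \<le> x$i} + 1) \<le> card {i. a + c*(y-a) \<le> step \<alpha> tb k x $ i}"
proof -
  define S where "S = {i. y \<le> x$i}"
  define S' where "S' = {i. a + c*(y-a) \<le> step \<alpha> tb k x $ i}"
  have sees_y: "i \<in> S'" if "y \<le> nb_max tb k x i" for i
  proof -
    have "c*(y-a) \<le> (1 - \<alpha> k)*(y-a)"
      using c a by (intro mult_right_mono) auto
    then have "a + c*(y-a) \<le> \<alpha> k * a + (1 - \<alpha> k) * y"
      by (simp add: algebra_simps)
    also have "\<dots> \<le> \<alpha> k * nb_min tb k x i + (1 - \<alpha> k) * nb_max tb k x i"
      using al c a that nb_min_ge_lo[of x tb k i] by (intro add_mono mult_left_mono) auto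
    finally show ?thesis by (simp add: S'_def step_nth)
  qed
  have "S \<subseteq> S'"
  proof
    fix i assume "i \<in> S"
    then have "y \<le> nb_max tb k x i"
      using self_le_nb_max[of x i tb k] by (simp add: S_def)
    then show "i \<in> S'" by (rule sees_y)
  qed
  show ?thesis
  proof (cases "S = UNIV")
    case True
    then have "S' = UNIV" using \<open>S \<subseteq> S'\<close> by auto
    then show ?thesis by (simp add: S'_def)
  next
    case False
    obtain i0 where i0: "i0 \<notin> S" "\<And>j. j \<notin> S \<Longrightarrow> x$j \<le> x$i0"
      using False Max_in[of "(\<lambda>j. x$j) ` (-S)"] Max_ge[of "(\<lambda>j. x$j) ` (-S)"] by fastforce
    obtain j where "j \<in> S" using reached by (auto simp: S_def)
    then have "j \<in> upper_set x i0"
      using i0(1) by (auto simp: S_def upper_set_def)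
    then obtain s where s: "s \<in> snd (tb k x i0)"
      using upper_nbrs_nonempty by blast
    then have "s \<in> S"
      using i0(2) upper_nbr_gt[OF s] by force
    then have "y \<le> nb_max tb k x i0"
      using nb_max_ge[of s tb k x i0] s by (force simp: S_def nbhd_def)
    then have "insert i0 S \<subseteq> S'"
      using sees_y \<open>S \<subseteq> S'\<close> by blast
    then have "card (insert i0 S) \<le> card S'"
      by (intro card_mono) auto
    then show ?thesis using i0(1) by (simp add: S_def S'_def)
  qed
qed

text \<open>Iterating the spreading step CARD('n) times from time p: the level
  lo + c^s (hi - lo) is reached by at least s + 1 nodes after s steps, hence by all nodes
  after CARD('n) steps. This lifts the minimum and shrinks the diameter by 1 - c^CARD('n).\<close>
lemma diam_contraction_up:
  assumes al: "\<And>t. 0 \<le> \<alpha> t" and c: "0 \<le> c" "\<And>t. c \<le> 1 - \<alpha> t"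
  shows "diam (traj \<alpha> tb k0 x0 (p + CARD('n)))
           \<le> (1 - c ^ CARD('n)) * diam (traj \<alpha> tb k0 x0 p)"
proof -
  define X where "X s = traj \<alpha> tb k0 x0 (p + s)" for s
  define a where "a = lo (X 0)"
  define b where "b = hi (X 0)"
  have al01: "0 \<le> \<alpha> t \<and> \<alpha> t \<le> 1" for t
    using al[of t] c(1) c(2)[of t] by linarith
  have a_le: "a \<le> lo (X s)" for s
    unfolding a_def X_def by (rule lo_traj_mono[OF al01]) simp
  have level: "min CARD('n) (s + 1) \<le> card {i. a + c^s * (b - a) \<le> X s $ i}" for s
  proof (induction s)
    case 0
    obtain j where "X 0 $ j = b" unfolding b_def by (rule hi_attained)
    then have "1 \<le> card {i. a + c^0 * (b - a) \<le> X 0 $ i}"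
      by (auto simp: Suc_le_eq card_gt_0_iff)
    then show ?case by simp
  next
    case (Suc s)
    define y where "y = a + c^s * (b - a)"
    have "a \<le> y"
      using c lo_le_hi[of "X 0"] by (simp add: y_def a_def b_def)
    moreover have "\<exists>i. y \<le> X s $ i"
    proof -
      have "0 < min CARD('n) (s + 1)" by simp
      then have "0 < card {i. y \<le> X s $ i}"
        using Suc.IH unfolding y_def by linarith
      then show ?thesis by (auto simp: card_gt_0_iff)
    qed
    ultimately have "min CARD('n) (card {i. y \<le> X s $ i} + 1)
                       \<le> card {i. a + c * (y - a) \<le> step \<alpha> tb (k0 + (p + s)) (X s) $ i}"
      using al c a_le by (intro spreading_step) auto
    also have "{i. a + c * (y - a) \<le> step \<alpha> tb (k0 + (p + s)) (X s) $ i}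
                 = {i. a + c ^ Suc s * (b - a) \<le> X (Suc s) $ i}"
      by (simp add: X_def y_def mult.assoc)
    finally show ?case
      using Suc.IH unfolding y_def by (simp add: min_def split: if_splits)
  qed
  have "{i. a + c ^ CARD('n) * (b - a) \<le> X CARD('n) $ i} = UNIV"
    using level[of "CARD('n)"] card_mono[of UNIV "{i. a + c ^ CARD('n) * (b - a) \<le> X CARD('n) $ i}"]
    by (intro card_eq_UNIV_imp_eq_UNIV) auto
  then have "a + c ^ CARD('n) * (b - a) \<le> lo (X CARD('n))"
    by (metis UNIV_I lo_attained mem_Collect_eq)
  moreover have "hi (X CARD('n)) \<le> b"
    unfolding b_def X_def by (rule hi_traj_antimono[OF al01]) simp
  ultimately show ?thesis
    by (simp add: X_def diam_def a_def b_def algebra_simps)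
qed

lemma diam_contraction_down:
  assumes al: "\<And>t. \<alpha> t \<le> 1" and c: "0 \<le> c" "\<And>t. c \<le> \<alpha> t"
  shows "diam (traj \<alpha> tb k0 x0 (p + CARD('n)))
           \<le> (1 - c ^ CARD('n)) * diam (traj \<alpha> tb k0 x0 p)"
  using nn_rule_pos.diam_contraction_up[OF mirror_pos, of "\<lambda>k. 1 - \<alpha> k" c k0 "-x0" p] assms
  by (simp add: traj_mirror diam_uminus)

text \<open>Part (iii): for a monotone parameter sequence, \<alpha>(k) or 1 - \<alpha>(k) is bounded below
  by a positive constant, so the diameter contracts geometrically; the minimum and the
  maximum of the state then converge to a common limit, which squeezes every node.\<close>
theorem asymptotic_consensus_monotone:
  assumes al: "\<And>t. 0 < \<alpha> t \<and> \<alpha> t < 1" and mono: "mono \<alpha> \<or> antimono \<alpha>"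
  shows "asymptotic_consensus \<alpha> tb k0 x0"
proof -
  define x where "x m = traj \<alpha> tb k0 x0 m" for m
  obtain c where c: "0 < c" "c < 1"
    and shrink: "\<And>p. diam (x (p + CARD('n))) \<le> (1 - c ^ CARD('n)) * diam (x p)"
  proof (cases "mono \<alpha>")
    case True
    then have "\<alpha> 0 \<le> \<alpha> t" for t by (simp add: mono_def)
    then show ?thesis
      using that[of "\<alpha> 0"] diam_contraction_down[of \<alpha> "\<alpha> 0"] al unfolding x_def
      by (meson less_imp_le)
  next
    case False
    then have "1 - \<alpha> 0 \<le> 1 - \<alpha> t" for t
      using mono by (simp add: antimono_def)
    then show ?thesis
      using that[of "1 - \<alpha> 0"] diam_contraction_up[of \<alpha> "1 - \<alpha> 0"] al unfolding x_def
      by (smt (verit))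
  qed
  have al01: "0 \<le> \<alpha> t \<and> \<alpha> t \<le> 1" for t
    using al[of t] by linarith
  have "\<exists>z. (\<lambda>m. lo (x m)) \<longlonglongrightarrow> z \<and> (\<lambda>m. hi (x m)) \<longlonglongrightarrow> z"
  proof (rule squeeze_common_limit[where N = "CARD('n)" and r = "1 - c ^ CARD('n)"])
    show "incseq (\<lambda>m. lo (x m))"
      unfolding x_def by (rule incseq_SucI, rule lo_traj_mono[OF al01]) simp
    show "decseq (\<lambda>m. hi (x m))"
      unfolding x_def by (rule decseq_SucI, rule hi_traj_antimono[OF al01]) simp
    show "lo (x m) \<le> hi (x m)" for m
      by (rule lo_le_hi)
    show "0 \<le> 1 - c ^ CARD('n)"
      using c by (simp add: power_le_one)
    show "1 - c ^ CARD('n) < 1"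
      using c by simp
    show "hi (x (p + CARD('n))) - lo (x (p + CARD('n))) \<le> (1 - c ^ CARD('n)) * (hi (x p) - lo (x p))"
      for p using shrink[of p] by (simp add: diam_def)
  qed
  then obtain z where "(\<lambda>m. lo (x m)) \<longlonglongrightarrow> z" "(\<lambda>m. hi (x m)) \<longlonglongrightarrow> z"
    by blast
  then have "(\<lambda>m. x m $ i) \<longlonglongrightarrow> z" for i
    by (rule real_tendsto_sandwich[rotated 2]) (simp_all add: lo_le hi_ge)
  then show ?thesis
    unfolding asymptotic_consensus_def x_def by blast
qed

end

lemma crowded_below_level:
  fixes x :: "real^'n::finite"
  assumes "1 \<le> mu" "mu \<le> card {l. x$j < x$l \<and> x$l \<le> v}"
  shows "x$j < v"
proof -
  have "card {l. x$j < x$l \<and> x$l \<le> v} \<noteq> 0"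
    using assms by linarith
  then have "{l. x$j < x$l \<and> x$l \<le> v} \<noteq> {}"
    by (metis card.empty)
  then show ?thesis by auto
qed

text \<open>Counting nodes crowded from above: if at least mu nodes lie in (a, v], then the
  nodes j > a that have at least mu nodes in (x_j, v] number at most
  #(a, v] - mu (they all lie below the mu nodes above the highest of them).\<close>
lemma count_crowded_below:
  fixes x :: "real^'n::finite"
  assumes mu: "1 \<le> mu" and full: "mu \<le> card {l. a < x$l \<and> x$l \<le> v}"
  shows "card {j. a < x$j \<and> mu \<le> card {l. x$j < x$l \<and> x$l \<le> v}} + mu
           \<le> card {l. a < x$l \<and> x$l \<le> v}"
proof (cases "{j. a < x$j \<and> mu \<le> card {l. x$j < x$l \<and> x$l \<le> v}} = {}")
  case True
  show ?thesis using full unfolding True by simp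
next
  case False
  define C where "C = {j. a < x$j \<and> mu \<le> card {l. x$j < x$l \<and> x$l \<le> v}}"
  obtain h where h: "h \<in> C" "\<And>j. j \<in> C \<Longrightarrow> x$j \<le> x$h"
    using False Max_in[of "(\<lambda>j. x$j) ` C"] Max_ge[of "(\<lambda>j. x$j) ` C"]
    unfolding C_def[symmetric] by fastforce
  define R where "R = {l. x$h < x$l \<and> x$l \<le> v}"
  have "mu \<le> card R" using h(1) by (simp add: C_def R_def)
  then have "x$h < v"
    using crowded_below_level[OF mu] by (simp add: R_def)
  have "C \<subseteq> {l. a < x$l \<and> x$l \<le> x$h}"
    using h(2) by (auto simp: C_def)
  then have "card C + card R \<le> card {l. a < x$l \<and> x$l \<le> x$h} + card R"
    by (simp add: card_mono)
  also have "\<dots> = card ({l. a < x$l \<and> x$l \<le> x$h} \<union> R)"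
    by (rule card_Un_disjoint[symmetric]) (auto simp: R_def)
  also have "\<dots> \<le> card {l. a < x$l \<and> x$l \<le> v}"
    using h(1) \<open>x$h < v\<close> by (intro card_mono) (auto simp: C_def R_def)
  finally show ?thesis using \<open>mu \<le> card R\<close> by (simp add: C_def)
qed

lemma many_uncrowded:
  fixes x :: "real^'n::finite"
  assumes mu: "1 \<le> mu" and vb: "v < b" and aw: "a < w"
    and sparse: "card {l. a < x$l \<and> x$l < v} < mu"
    and full: "mu \<le> card {l. a < x$l \<and> x$l \<le> v}"
  shows "mu \<le> card {j. a < x$j \<and> x$j < b \<and> card {l. x$j < x$l \<and> x$l \<le> v} < mu
                                   \<and> card {l. w \<le> x$l \<and> x$l < x$j} < mu}"
    (is "mu \<le> card ?good")
proof -
  define J where "J = {j. a < x$j \<and> x$j < b}"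
  define Q where "Q = {l. a < x$l \<and> x$l \<le> v}"
  define V where "V = {l \<in> J. v < x$l}"
  define CA where "CA = {j. a < x$j \<and> mu \<le> card {l. x$j < x$l \<and> x$l \<le> v}}"
  define CB where "CB = {j \<in> J. mu \<le> card {l. w \<le> x$l \<and> x$l < x$j}}"
  have "CB \<subseteq> V"
  proof
    fix j assume j: "j \<in> CB"
    have "v < x$j"
    proof (rule ccontr)
      assume "\<not> v < x$j"
      then have "{l. w \<le> x$l \<and> x$l < x$j} \<subseteq> {l. a < x$l \<and> x$l < v}"
        using aw by auto
      then have "card {l. w \<le> x$l \<and> x$l < x$j} \<le> card {l. a < x$l \<and> x$l < v}"
        by (rule card_mono[rotated]) simp
      then have "card {l. w \<le> x$l \<and> x$l < x$j} < mu"
        using sparse by linarith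
      then show False
        using j by (simp add: CB_def)
    qed
    then show "j \<in> V" using j by (simp add: CB_def J_def V_def)
  qed
  have "CA \<subseteq> Q"
    using crowded_below_level[OF mu] by (force simp: CA_def Q_def)
  have "J = Q \<union> V" "Q \<inter> V = {}"
    using vb by (auto simp: J_def Q_def V_def)
  then have card_J: "card J = card Q + card V"
    by (simp add: card_Un_disjoint)
  have "J = (?good \<union> CA) \<union> CB" "(?good \<union> CA) \<inter> CB = {}" "?good \<inter> CA = {}"
    using \<open>CA \<subseteq> Q\<close> \<open>CB \<subseteq> V\<close> \<open>Q \<inter> V = {}\<close> vb
    by (auto simp: J_def CA_def CB_def not_less Q_def)
  then have "card J = card ?good + card CA + card CB"
    by (simp add: card_Un_disjoint)
  moreover have "card CB \<le> card V"
    using \<open>CB \<subseteq> V\<close> by (simp add: card_mono)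
  moreover have "card CA + mu \<le> card Q"
    using count_crowded_below[OF mu full] by (simp add: CA_def Q_def)
  ultimately show ?thesis using card_J by linarith
qed

context nn_rule_pos
begin

lemma inner_nodes_nonempty: "mu \<le> card (inner_nodes x) \<Longrightarrow> inner_nodes x \<noteq> {}"
  using mu_pos by (metis card.empty le_zero_eq not_one_le_zero)

text \<open>The reach of a minimal node \<beta>: the largest value v it sees lies above the minimum,
  and fewer than mu nodes lie strictly between the minimum and v (they are all upper
  neighbours of \<beta>, besides the one attaining v).\<close>
lemma bottom_reach:
  assumes \<beta>: "x$\<beta> = lo x" and inner: "inner_nodes x \<noteq> {}"
  shows "lo x < nb_max tb k x \<beta>"
    and "card {l. lo x < x$l \<and> x$l < nb_max tb k x \<beta>} < mu"
proof -
  define v where "v = nb_max tb k x \<beta>"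
  have "upper_set x \<beta> \<noteq> {}"
    using inner \<beta> by (auto simp: inner_nodes_def upper_set_def)
  then obtain s where s: "s \<in> snd (tb k x \<beta>)"
    using upper_nbrs_nonempty by blast
  then show "lo x < v"
    using upper_nbr_gt[OF s] nb_max_ge[of s tb k x \<beta>] \<beta> by (simp add: v_def nbhd_def)
  obtain s0 where s0: "s0 \<in> nbhd tb k x \<beta>" "v = x$s0"
    unfolding v_def by (rule nb_max_attained)
  have "fst (tb k x \<beta>) = {}"
    using lower_nbr_lt lo_le[of x] \<beta> by (metis all_not_in_conv not_le)
  then have s0_upper: "s0 \<in> snd (tb k x \<beta>)"
    using s0 \<open>lo x < v\<close> \<beta> by (auto simp: nbhd_def)
  have "{l. lo x < x$l \<and> x$l < v} \<subseteq> snd (tb k x \<beta>) - {s0}"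
  proof
    fix l assume l: "l \<in> {l. lo x < x$l \<and> x$l < v}"
    then have "l \<in> upper_set x \<beta>" using \<beta> by (simp add: upper_set_def)
    then show "l \<in> snd (tb k x \<beta>) - {s0}"
      using upper_nbrs_closest[OF s0_upper] l s0(2) by fastforce
  qed
  then have "card {l. lo x < x$l \<and> x$l < v} \<le> card (snd (tb k x \<beta>)) - 1"
    using card_mono[of "snd (tb k x \<beta>) - {s0}"] s0_upper by fastforce
  then show "card {l. lo x < x$l \<and> x$l < v} < mu"
    using card_upper_nbrs[of k x \<beta>] mu_pos by linarith
qed

text \<open>A minimal node has at least mu nodes above it, so its mu upper neighbours all lie
  in (lo x, v].\<close>
lemma bottom_reach_full:
  assumes \<beta>: "x$\<beta> = lo x" and inner: "mu \<le> card (inner_nodes x)"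
  shows "mu \<le> card {l. lo x < x$l \<and> x$l \<le> nb_max tb k x \<beta>}"
proof -
  have "inner_nodes x \<subseteq> upper_set x \<beta>"
    using \<beta> by (auto simp: inner_nodes_def upper_set_def)
  then have "card (inner_nodes x) \<le> card (upper_set x \<beta>)"
    by (simp add: card_mono)
  then have "card (snd (tb k x \<beta>)) = mu"
    using card_upper_nbrs[of k x \<beta>] inner by simp
  moreover have "snd (tb k x \<beta>) \<subseteq> {l. lo x < x$l \<and> x$l \<le> nb_max tb k x \<beta>}"
  proof
    fix l assume l: "l \<in> snd (tb k x \<beta>)"
    then have "x$l \<le> nb_max tb k x \<beta>"
      by (intro nb_max_ge) (simp add: nbhd_def)
    then show "l \<in> {l. lo x < x$l \<and> x$l \<le> nb_max tb k x \<beta>}"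
      using upper_nbr_gt[OF l] \<beta> by simp
  qed
  ultimately show ?thesis
    by (metis card_mono finite)
qed

lemma bottom_reach_below_hi:
  assumes \<beta>: "x$\<beta> = lo x" and inner: "mu \<le> card (inner_nodes x)"
  shows "nb_max tb k x \<beta> < hi x"
proof (rule ccontr)
  assume "\<not> nb_max tb k x \<beta> < hi x"
  then have "inner_nodes x \<subseteq> {l. lo x < x$l \<and> x$l < nb_max tb k x \<beta>}"
    by (auto simp: inner_nodes_def)
  then have "card (inner_nodes x) \<le> card {l. lo x < x$l \<and> x$l < nb_max tb k x \<beta>}"
    by (simp add: card_mono)
  then show False
    using bottom_reach(2)[OF \<beta> inner_nodes_nonempty[OF inner], of k] inner by linarith
qed

lemma top_reach_above_lo:
  assumes \<tau>: "x$\<tau> = hi x" and inner: "mu \<le> card (inner_nodes x)"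
  shows "lo x < nb_min tb k x \<tau>"
  using nn_rule_pos.bottom_reach_below_hi[OF mirror_pos, of "-x" \<tau> k] assms
  by (simp add: lo_uminus hi_uminus inner_nodes_uminus nb_max_mirror)

text \<open>An inner node j with fewer than mu nodes in (x_j, v], v the reach of a minimal node
  \<beta>, sees a value above v (its upper neighbours cannot all fit in (x_j, v], since the
  maximal node lies above v). Hence it moves strictly above the new value of \<beta>.\<close>
lemma stays_above_min:
  assumes al: "0 < \<alpha> k" "\<alpha> k < 1"
    and \<beta>: "x$\<beta> = lo x" and inner: "mu \<le> card (inner_nodes x)" and j: "j \<in> inner_nodes x"
    and few: "card {l. x$j < x$l \<and> x$l \<le> nb_max tb k x \<beta>} < mu"
  shows "lo (step \<alpha> tb k x) < step \<alpha> tb k x $ j"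
proof -
  define v where "v = nb_max tb k x \<beta>"
  have "v < nb_max tb k x j"
  proof (rule ccontr)
    assume "\<not> v < nb_max tb k x j"
    then have sub: "snd (tb k x j) \<subseteq> {l. x$j < x$l \<and> x$l \<le> v}"
      using upper_nbr_gt nb_max_ge by (fastforce simp: nbhd_def)
    obtain \<tau> where \<tau>: "x$\<tau> = hi x" by (rule hi_attained)
    have "\<tau> \<in> upper_set x j - snd (tb k x j)"
      using sub \<tau> j bottom_reach_below_hi[OF \<beta> inner, of k]
      by (auto simp: upper_set_def inner_nodes_def v_def)
    then have "card (snd (tb k x j)) < card (upper_set x j)"
      using upper_nbrs_sub[of k x j] by (intro psubset_card_mono) auto
    then have "card (snd (tb k x j)) = mu"
      using card_upper_nbrs[of k x j] by simp
    then show False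
      using few card_mono[OF _ sub] by (simp add: v_def)
  qed
  have "nb_min tb k x \<beta> = lo x"
    using nb_min_ge_lo[of x tb k \<beta>] nb_min_le_self[of tb k x \<beta>] \<beta> by simp
  then have "step \<alpha> tb k x $ \<beta> = \<alpha> k * lo x + (1 - \<alpha> k) * v"
    by (simp add: step_nth v_def)
  also have "\<dots> < \<alpha> k * nb_min tb k x j + (1 - \<alpha> k) * nb_max tb k x j"
    using al \<open>v < nb_max tb k x j\<close> nb_min_ge_lo[of x tb k j]
    by (intro add_le_less_mono mult_left_mono mult_strict_left_mono) auto
  finally show ?thesis
    using lo_le[of "step \<alpha> tb k x" \<beta>] by (simp add: step_nth)
qed

lemma stays_below_max:
  assumes al: "0 < \<alpha> k" "\<alpha> k < 1"
    and \<tau>: "x$\<tau> = hi x" and inner: "mu \<le> card (inner_nodes x)" and j: "j \<in> inner_nodes x"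
    and few: "card {l. nb_min tb k x \<tau> \<le> x$l \<and> x$l < x$j} < mu"
  shows "step \<alpha> tb k x $ j < hi (step \<alpha> tb k x)"
proof -
  have "{l. - x$j < - x$l \<and> - x$l \<le> - nb_min tb k x \<tau>} = {l. nb_min tb k x \<tau> \<le> x$l \<and> x$l < x$j}"
    by auto
  then show ?thesis
    using nn_rule_pos.stays_above_min[OF mirror_pos, of "\<lambda>k. 1 - \<alpha> k" k "-x" \<tau> j] assms
    by (simp add: lo_uminus hi_uminus inner_nodes_uminus nb_max_mirror step_mirror)
qed

lemma inner_nodes_invariant:
  assumes al: "0 < \<alpha> k" "\<alpha> k < 1" and inner: "mu \<le> card (inner_nodes x)"
  shows "mu \<le> card (inner_nodes (step \<alpha> tb k x))"
proof -
  obtain \<beta> where \<beta>: "x$\<beta> = lo x" by (rule lo_attained)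
  obtain \<tau> where \<tau>: "x$\<tau> = hi x" by (rule hi_attained)
  define v where "v = nb_max tb k x \<beta>"
  define w where "w = nb_min tb k x \<tau>"
  have "mu \<le> card {j. lo x < x$j \<and> x$j < hi x \<and> card {l. x$j < x$l \<and> x$l \<le> v} < mu
                                       \<and> card {l. w \<le> x$l \<and> x$l < x$j} < mu}"
    unfolding v_def w_def
    by (rule many_uncrowded[OF mu_pos bottom_reach_below_hi[OF \<beta> inner]
          top_reach_above_lo[OF \<tau> inner] bottom_reach(2)[OF \<beta> inner_nodes_nonempty[OF inner]]
          bottom_reach_full[OF \<beta> inner]])
  also have "\<dots> \<le> card (inner_nodes (step \<alpha> tb k x))"
    using stays_above_min[of \<alpha> k, OF al \<beta> inner] stays_below_max[of \<alpha> k, OF al \<tau> inner]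
    by (intro card_mono) (auto simp: inner_nodes_def v_def w_def)
  finally show ?thesis .
qed

text \<open>Part (ii), pointwise: if the initial values are pairwise distinct and there are more
  than mu + 1 nodes, at least mu nodes are inner forever, so consensus is never reached.\<close>
lemma no_consensus_if_distinct:
  assumes al: "\<And>t. 0 < \<alpha> t \<and> \<alpha> t < 1" and N: "mu + 1 < CARD('n)"
    and distinct: "\<forall>i j. i \<noteq> j \<longrightarrow> x0$i \<noteq> x0$j"
  shows "\<not> finite_time_consensus \<alpha> tb k0 x0"
proof
  obtain \<beta> where \<beta>: "x0$\<beta> = lo x0" by (rule lo_attained)
  obtain \<tau> where \<tau>: "x0$\<tau> = hi x0" by (rule hi_attained)
  have "UNIV - {\<beta>, \<tau>} \<subseteq> inner_nodes x0"
  proof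
    fix j assume "j \<in> UNIV - {\<beta>, \<tau>}"
    then have "x0$j \<noteq> lo x0" "x0$j \<noteq> hi x0"
      using distinct \<beta> \<tau> by (metis DiffE insertCI)+
    then show "j \<in> inner_nodes x0"
      using lo_le[of x0 j] hi_ge[of x0 j] by (simp add: inner_nodes_def order.strict_iff_order)
  qed
  then have "CARD('n) - 2 \<le> card (inner_nodes x0)"
    using card_mono[of "inner_nodes x0" "UNIV - {\<beta>, \<tau>}"] card_Diff_subset[of "{\<beta>, \<tau>}" UNIV]
      card_insert_le_m1[of 2 "{\<tau>}" \<beta>] by fastforce
  then have inner0: "mu \<le> card (inner_nodes x0)"
    using N by linarith
  have inner: "mu \<le> card (inner_nodes (traj \<alpha> tb k0 x0 m))" for m
    by (induction m) (simp_all add: inner0 inner_nodes_invariant al)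
  assume "finite_time_consensus \<alpha> tb k0 x0"
  then obtain m z where "\<forall>i. traj \<alpha> tb k0 x0 m $ i = z"
    by (auto simp: finite_time_consensus_def)
  moreover obtain t where "traj \<alpha> tb k0 x0 m $ t = hi (traj \<alpha> tb k0 x0 m)"
    by (rule hi_attained)
  ultimately have "inner_nodes (traj \<alpha> tb k0 x0 m) = {}"
    by (auto simp: inner_nodes_def)
  then show False
    using inner[of m] mu_pos by simp
qed

end

text \<open>Almost every initial state has pairwise distinct coordinates: each coincidence
  x_i = x_j (i \<noteq> j) confines x to a hyperplane, which is a Lebesgue null set.\<close>
lemma AE_coordinates_differ:
  fixes i j :: "'n::finite"
  assumes "i \<noteq> j"
  shows "AE x in lborel. (x::real^'n)$i \<noteq> x$j"
proof -
  define u :: "real^'n" where "u = axis i 1 - axis j 1"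
  have ux: "u \<bullet> x = x$i - x$j" for x :: "real^'n"
    by (simp add: u_def inner_diff_left inner_axis')
  have "u $ i = 1"
    using assms by (simp add: u_def axis_def)
  then have "negligible {x. u \<bullet> x = 0}"
    by (intro negligible_hyperplane) auto
  then obtain N where N: "N \<in> null_sets lborel" "{x. u \<bullet> x = 0} \<subseteq> N"
    unfolding negligible_iff_null_sets null_sets_completion_iff2 by blast
  show ?thesis
    by (rule AE_I'[OF N(1)]) (use N(2) ux in auto)
qed

lemma AE_coordinates_distinct:
  "AE x in lborel. \<forall>i j. i \<noteq> j \<longrightarrow> (x::real^'n::finite)$i \<noteq> x$j"
proof -
  have "AE x in lborel. fst p \<noteq> snd p \<longrightarrow> (x::real^'n)$(fst p) \<noteq> x$(snd p)"
    for p :: "'n \<times> 'n"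
    by (cases "fst p = snd p") (auto elim: AE_mp[OF AE_coordinates_differ])
  then have "AE x in lborel. \<forall>p\<in>(UNIV :: ('n \<times> 'n) set). fst p \<noteq> snd p \<longrightarrow> (x::real^'n)$(fst p) \<noteq> x$(snd p)"
    by (intro AE_finite_allI) auto
  then show ?thesis
    by (rule AE_mp) auto
qed

theorem theorem8:
  fixes \<alpha> :: "nat \<Rightarrow> real" and mu :: nat
    and tb :: "nat \<Rightarrow> real^'n \<Rightarrow> 'n \<Rightarrow> 'n set \<times> 'n set"
  assumes n3: "CARD('n) \<ge> 3"
    and mu_pos: "mu \<ge> 1"
    and alpha: "\<And>k. 0 < \<alpha> k \<and> \<alpha> k < 1"
    and tb: "valid_tiebreak mu tb"
  shows "(CARD('n) \<le> mu + 1 \<longrightarrow> (\<forall>k0 x0. finite_time_consensus \<alpha> tb k0 x0))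
       \<and> (CARD('n) > mu + 1 \<longrightarrow>
            (\<forall>k0. AE x0 in lborel. \<not> finite_time_consensus \<alpha> tb k0 x0))
       \<and> (CARD('n) > mu + 1 \<and> (mono \<alpha> \<or> antimono \<alpha>) \<longrightarrow>
            (\<forall>k0 x0. asymptotic_consensus \<alpha> tb k0 x0))"
proof -
  interpret nn_rule_pos mu tb
    by (intro nn_rule_pos.intro nn_rule.intro nn_rule_pos_axioms.intro tb mu_pos)
  show ?thesis
  proof (intro conjI impI allI)
    fix k0 x0
    assume "CARD('n) \<le> mu + 1"
    then show "finite_time_consensus \<alpha> tb k0 x0"
      by (rule consensus_one_step)
  next
    fix k0
    assume N: "CARD('n) > mu + 1"
    show "AE x0 in lborel. \<not> finite_time_consensus \<alpha> tb k0 x0"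
      using AE_coordinates_distinct
      by (rule AE_mp) (auto intro!: AE_I2 no_consensus_if_distinct[OF alpha N])
  next
    fix k0 x0
    assume "CARD('n) > mu + 1 \<and> (mono \<alpha> \<or> antimono \<alpha>)"
    then show "asymptotic_consensus \<alpha> tb k0 x0"
      using alpha by (intro asymptotic_consensus_monotone) auto
  qed
qed

end
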